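(* Let $\mathbf{X}\sim\mathcal{N}(\mathbf{0}_n,\mathbf{I}_n)$. Then $$\lim_{n\to\infty}\frac{\mathsf{Var}(\vec{\mathbf{X}})}{n}=0.$$
   Context: $\vec{\mathbf{X}}$ is the vector $\mathbf{X}$ with entries sorted in ascending order, and $\mathsf{Var}(\vec{\mathbf{X}})=\mathbb{E}\left[\|\vec{\mathbf{X}}-\mathbb{E}[\vec{\mathbf{X}}]\|^2\right]$ with $\|\cdot\|$ the Euclidean norm. *)

theory Defs
  imports "HOL-Probability.Probability"
begin

text \<open>Law of X ~ N(0_n, I_n): product of n independent standard normals,
  as a measure on functions indexed by {..<n}.\<close>
definition gauss_vec :: "nat \<Rightarrow> (nat \<Rightarrow> real) measure" where
  "gauss_vec n = PiM {..<n} (\<lambda>_. density lborel std_normal_density)"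

definition sorted_entry :: "nat \<Rightarrow> (nat \<Rightarrow> real) \<Rightarrow> nat \<Rightarrow> real" where
  "sorted_entry n x k = sort (map x [0..<n]) ! k"

definition var_sorted :: "nat \<Rightarrow> real" where
  "var_sorted n =
     (\<integral>x. (\<Sum>k<n. (sorted_entry n x k - (\<integral>y. sorted_entry n y k \<partial>gauss_vec n))\<^sup>2) \<partial>gauss_vec n)"

end

(*
  The variance of a random vector is its least mean squared distance to a constant vector,
  so Var(sorted X) <= E |sorted X - c|^2 for every deterministic c.  Clipping the entries to
  [-R, R] costs at most sum_i X_i^4 / R^2.  Two numbers in [-R, R] differ by at most the mesh
  h = 2R/J times one plus the number of grid points -R + j h separating them; summed over the
  coordinates of two sorted vectors this bounds their squared distance by
  2Rh (n + sum_j |N_j - N'_j|), where N_j counts the entries below the j-th grid point.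
  Choosing for c the sorted vector with counts floor (n F(t_j)), F the distribution function,
  leaves E |N_j - n F(t_j)| <= sqrt n, the standard deviation bound for a binomial count.
  Altogether Var(sorted X) <= 8R^2 n/J + 8R^2 (sqrt n + 1) + 2n E X^4 / R^2, which is o(n)
  once J and R are large.  Only a finite fourth moment of the entries is needed.
*)
theory Submission
  imports Defs "HOL-Real_Asymp.Real_Asymp"
begin

lemma sorted_nth_le_iff_less_length_filter:
  fixes xs :: "'a::linorder list"
  assumes "sorted xs" "k < length xs"
  shows "xs ! k \<le> t \<longleftrightarrow> k < length (filter (\<lambda>y. y \<le> t) xs)"
  using assms
proof (induction xs arbitrary: k)
  case (Cons a xs)
  show ?case
  proof (cases "a \<le> t")
    case True
    then show ?thesis using Cons by (cases k) auto
  next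
    case False
    then have "filter (\<lambda>y. y \<le> t) xs = []" using Cons.prems(1) by (auto simp: filter_empty_conv)
    moreover have "a \<le> (a # xs) ! k" using Cons.prems by (cases k) auto
    ultimately show ?thesis using False by auto
  qed
qed simp

definition count_le :: "nat \<Rightarrow> real \<Rightarrow> (nat \<Rightarrow> real) \<Rightarrow> nat" where
  "count_le n t x = length (filter (\<lambda>y. y \<le> t) (map x [0..<n]))"

lemma count_le_eq_sum_indicator: "real (count_le n t x) = (\<Sum>i<n. indicator {..t} (x i))"
  unfolding count_le_def by (induction n) (auto simp: indicator_def)

lemma count_le_le: "count_le n t x \<le> n"
  unfolding count_le_def by (metis diff_zero length_filter_le length_map length_upt)

lemma sorted_entry_le_iff:
  assumes "k < n"
  shows "sorted_entry n x k \<le> t \<longleftrightarrow> k < count_le n t x"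
proof -
  have "length (filter (\<lambda>y. y \<le> t) (sort (map x [0..<n]))) = count_le n t x"
    unfolding count_le_def by (metis filter_sort length_sort)
  then show ?thesis
    unfolding sorted_entry_def using assms
    by (simp add: sorted_nth_le_iff_less_length_filter)
qed

lemma sorted_entry_in_image:
  assumes "k < n"
  shows "sorted_entry n x k \<in> x ` {..<n}"
proof -
  have "sorted_entry n x k \<in> set (sort (map x [0..<n]))"
    unfolding sorted_entry_def using assms by (intro nth_mem) simp
  then show ?thesis by auto
qed

lemma sum_sorted_entry:
  "(\<Sum>k<n. g (sorted_entry n x k)) = (\<Sum>i<n. g (x i))"
proof -
  have "(\<Sum>k<n. g (sorted_entry n x k)) = sum_list (map g (sort (map x [0..<n])))"
    unfolding sorted_entry_def sum_list_sum_nth by (simp add: lessThan_atLeast0)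
  also have "\<dots> = sum_list (map g (map x [0..<n]))"
    by (metis mset_map mset_sort sum_mset_sum_list)
  finally show ?thesis
    by (simp add: sum_list_sum_nth lessThan_atLeast0)
qed

lemma sum_abs_of_bool_less_diff:
  assumes "A \<le> n" "B \<le> n"
  shows "(\<Sum>k<n. \<bar>of_bool (k < A) - of_bool (k < B)\<bar>) = \<bar>real A - real B\<bar>"
proof -
  have sum_ind: "(\<Sum>k<n. of_bool (k < C)) = real C" if "C \<le> n" for C
  proof -
    have "{..<n} \<inter> {k. k < C} = {..<C}" using that by auto
    then show ?thesis by (simp add: of_bool_def sum.If_cases)
  qed
  show ?thesis
  proof (cases "A \<le> B")
    case True
    then have "(\<Sum>k<n. \<bar>of_bool (k < A) - of_bool (k < B)\<bar>)
        = (\<Sum>k<n. of_bool (k < B) - of_bool (k < A) :: real)"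
      by (intro sum.cong) auto
    then show ?thesis using True
      by (simp only: sum_subtractf sum_ind[OF assms(1)] sum_ind[OF assms(2)])
  next
    case False
    then have "(\<Sum>k<n. \<bar>of_bool (k < A) - of_bool (k < B)\<bar>)
        = (\<Sum>k<n. of_bool (k < A) - of_bool (k < B) :: real)"
      by (intro sum.cong) auto
    then show ?thesis using False
      by (simp only: sum_subtractf sum_ind[OF assms(1)] sum_ind[OF assms(2)])
  qed
qed

lemma dist_le_grid_crossings:
  fixes a b lo h :: real and J :: nat
  assumes h: "h > 0" and ab: "lo \<le> a" "lo \<le> b" "a \<le> lo + real J * h" "b \<le> lo + real J * h"
  shows "\<bar>a - b\<bar> \<le> h * (1 + (\<Sum>j<J. \<bar>of_bool (a \<le> lo + real j * h) - of_bool (b \<le> lo + real j * h)\<bar>))"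
proof -
  have ordered: "b - a \<le> h * (1 + (\<Sum>j<J. \<bar>of_bool (a \<le> lo + real j * h) - of_bool (b \<le> lo + real j * h)\<bar>))"
    if le: "lo \<le> a" "a \<le> b" "b \<le> lo + real J * h" for a b
  proof -
    define j1 where "j1 = nat \<lceil>(a - lo) / h\<rceil>"
    define j2 where "j2 = nat \<lceil>(b - lo) / h\<rceil>"
    have "(b - lo) / h \<le> J" using le h by (simp add: divide_le_eq mult.commute)
    then have "j2 \<le> J" unfolding j2_def by linarith
    have "0 \<le> (a - lo) / h" "0 \<le> (b - lo) / h" using le h by simp_all
    then have j1_eq: "real j1 = of_int \<lceil>(a - lo) / h\<rceil>" and j2_eq: "real j2 = of_int \<lceil>(b - lo) / h\<rceil>"
      unfolding j1_def j2_def by simp_all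
    have j1: "real j1 \<le> (a - lo) / h + 1" "(a - lo) / h \<le> real j1"
      using j1_eq of_int_ceiling_le_add_one le_of_int_ceiling by auto
    have j2: "(b - lo) / h \<le> real j2" using j2_eq le_of_int_ceiling by auto
    have below_j2: "real j < (b - lo) / h" if "j < j2" for j
    proof -
      have "int j < \<lceil>(b - lo) / h\<rceil>" using that j2_eq by linarith
      then show ?thesis by (simp add: less_ceiling_iff)
    qed
    have crossing: "\<bar>of_bool (a \<le> lo + real j * h) - of_bool (b \<le> lo + real j * h) :: real\<bar> = 1"
      if "j \<in> {j1..<j2}" for j
    proof -
      have "(a - lo) / h \<le> real j" "real j < (b - lo) / h" using that j1 below_j2 by auto
      then have "a \<le> lo + real j * h" "\<not> b \<le> lo + real j * h" using h by (simp_all add: field_simps)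
      then show ?thesis by simp
    qed
    have "(b - a) / h - 1 \<le> real (j2 - j1)"
      using j1 j2 by (simp add: diff_divide_distrib)
    also have "\<dots> = (\<Sum>j\<in>{j1..<j2}. \<bar>of_bool (a \<le> lo + real j * h) - of_bool (b \<le> lo + real j * h)\<bar>)"
      using crossing by simp
    also have "\<dots> \<le> (\<Sum>j<J. \<bar>of_bool (a \<le> lo + real j * h) - of_bool (b \<le> lo + real j * h)\<bar>)"
      using \<open>j2 \<le> J\<close> by (intro sum_mono2) auto
    finally show ?thesis using h by (simp add: field_simps)
  qed
  show ?thesis
  proof (cases "a \<le> b")
    case True
    then show ?thesis using ordered[of a b] ab by simp
  next
    case False
    then show ?thesis using ordered[of b a] ab by (simp add: abs_minus_commute)
  qed
qed

lemma obtain_threshold_sequence: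
  fixes lo h :: real and J :: nat and C :: "nat \<Rightarrow> nat"
  assumes h: "h > 0"
    and C_mono: "\<And>j j'. j \<le> j' \<Longrightarrow> j' < J \<Longrightarrow> C j \<le> C j'"
  obtains c where "\<And>k. lo \<le> c k \<and> c k \<le> lo + real J * h"
    and "\<And>j k. j < J \<Longrightarrow> c k \<le> lo + real j * h \<longleftrightarrow> k < C j"
proof -
  define first where "first k = (LEAST j. j < J \<and> k < C j)" for k
  define c where "c k = lo + real (if \<exists>j<J. k < C j then first k else J) * h" for k
  have first: "first k < J" "k < C (first k)" "\<And>j. j < J \<Longrightarrow> k < C j \<Longrightarrow> first k \<le> j"
    if "\<exists>j<J. k < C j" for k
    using that LeastI_ex[of "\<lambda>j. j < J \<and> k < C j"] Least_le[of "\<lambda>j. j < J \<and> k < C j"]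
    unfolding first_def by auto
  have "lo \<le> c k \<and> c k \<le> lo + real J * h" for k
    using first(1)[of k] h unfolding c_def by (cases "\<exists>j<J. k < C j") (auto simp: less_imp_le)
  moreover have "c k \<le> lo + real j * h \<longleftrightarrow> k < C j" if "j < J" for j k
  proof (cases "\<exists>j<J. k < C j")
    case True
    then have "c k \<le> lo + real j * h \<longleftrightarrow> first k \<le> j" using h unfolding c_def by simp
    also have "\<dots> \<longleftrightarrow> k < C j"
      using first[OF True] C_mono[of "first k" j] that by (auto intro: less_le_trans)
    finally show ?thesis .
  next
    case False
    then show ?thesis using that h unfolding c_def by auto
  qed
  ultimately show ?thesis using that by blast
qed

definition clip :: "real \<Rightarrow> real \<Rightarrow> real" where
  "clip R y = max (- R) (min R y)"

lemma clip_le_iff: "- R \<le> t \<Longrightarrow> t < R \<Longrightarrow> clip R s \<le> t \<longleftrightarrow> s \<le> t"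
  unfolding clip_def by auto

lemma clip_bounds: "R \<ge> 0 \<Longrightarrow> - R \<le> clip R s \<and> clip R s \<le> R"
  unfolding clip_def by auto

lemma sq_diff_clip_le:
  assumes "R > 0"
  shows "(y - clip R y)\<^sup>2 \<le> y ^ 4 / R\<^sup>2"
proof (cases "\<bar>y\<bar> \<le> R")
  case True
  then show ?thesis unfolding clip_def by auto
next
  case False
  then have "\<bar>y - clip R y\<bar> \<le> \<bar>y\<bar>" "\<bar>R\<bar> \<le> \<bar>y\<bar>"
    unfolding clip_def using assms by auto
  then have "(y - clip R y)\<^sup>2 \<le> y\<^sup>2" "R\<^sup>2 \<le> y\<^sup>2"
    by (simp_all only: abs_le_square_iff)
  then have "(y - clip R y)\<^sup>2 * R\<^sup>2 \<le> y\<^sup>2 * y\<^sup>2"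
    by (intro mult_mono) auto
  then show ?thesis using assms by (simp add: le_divide_eq power4_eq_xxxx power2_eq_square mult.assoc)
qed

lemma sum_sq_clip_sorted_entry_diff_le:
  fixes R h :: real and J n :: nat and C :: "nat \<Rightarrow> nat" and c :: "nat \<Rightarrow> real"
  assumes h: "h > 0" and Jh: "real J * h = 2 * R"
    and c_bounds: "\<And>k. - R \<le> c k \<and> c k \<le> R"
    and c_thresholds: "\<And>j k. j < J \<Longrightarrow> c k \<le> - R + real j * h \<longleftrightarrow> k < C j"
    and C_le: "\<And>j. j < J \<Longrightarrow> C j \<le> n"
  shows "(\<Sum>k<n. (clip R (sorted_entry n x k) - c k)\<^sup>2)
    \<le> 2 * R * h * (real n + (\<Sum>j<J. \<bar>real (count_le n (- R + real j * h) x) - real (C j)\<bar>))"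
proof -
  let ?t = "\<lambda>j. - R + real j * h"
  let ?cross = "\<lambda>k j. \<bar>of_bool (k < count_le n (?t j) x) - of_bool (k < C j) :: real\<bar>"
  have "0 \<le> real J * h" using h by simp
  then have "R \<ge> 0" using Jh by simp
  have clip_thresholds: "clip R (sorted_entry n x k) \<le> ?t j \<longleftrightarrow> k < count_le n (?t j) x"
    if "k < n" "j < J" for k j
  proof -
    have "real j * h < real J * h" using that h by simp
    then show ?thesis using that h Jh
      by (simp add: clip_le_iff sorted_entry_le_iff)
  qed
  have term_le: "(clip R (sorted_entry n x k) - c k)\<^sup>2 \<le> 2 * R * h * (1 + (\<Sum>j<J. ?cross k j))"
    if k: "k < n" for k
  proof -
    let ?T = "clip R (sorted_entry n x k)"
    have T: "- R \<le> ?T \<and> ?T \<le> R" using clip_bounds[OF \<open>R \<ge> 0\<close>] .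
    then have "\<bar>?T - c k\<bar> \<le> 2 * R" using c_bounds[of k] by linarith
    then have "(?T - c k)\<^sup>2 \<le> 2 * R * \<bar>?T - c k\<bar>"
      by (metis abs_ge_zero mult_right_mono power2_abs power2_eq_square)
    also have "\<bar>?T - c k\<bar> \<le> h * (1 + (\<Sum>j<J. \<bar>of_bool (?T \<le> ?t j) - of_bool (c k \<le> ?t j)\<bar>))"
      using dist_le_grid_crossings[OF h, of "- R" ?T "c k" J] T c_bounds[of k] Jh by simp
    also have "(\<Sum>j<J. \<bar>of_bool (?T \<le> ?t j) - of_bool (c k \<le> ?t j)\<bar>) = (\<Sum>j<J. ?cross k j)"
      using k by (intro sum.cong refl) (simp only: lessThan_iff clip_thresholds c_thresholds)
    finally show ?thesis using \<open>R \<ge> 0\<close> by (simp add: mult_left_mono mult.assoc)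
  qed
  have "(\<Sum>k<n. (clip R (sorted_entry n x k) - c k)\<^sup>2) \<le> (\<Sum>k<n. 2 * R * h * (1 + (\<Sum>j<J. ?cross k j)))"
    using term_le by (intro sum_mono) simp
  also have "\<dots> = 2 * R * h * (real n + (\<Sum>k<n. \<Sum>j<J. ?cross k j))"
    by (simp add: sum_distrib_left[symmetric] sum.distrib)
  also have "(\<Sum>k<n. \<Sum>j<J. ?cross k j) = (\<Sum>j<J. \<Sum>k<n. ?cross k j)"
    by (rule sum.swap)
  also have "(\<Sum>j<J. \<Sum>k<n. ?cross k j) = (\<Sum>j<J. \<bar>real (count_le n (?t j) x) - real (C j)\<bar>)"
    by (intro sum.cong refl sum_abs_of_bool_less_diff count_le_le C_le) simp
  finally show ?thesis .
qed

lemma sum_sq_sorted_entry_diff_le: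
  fixes R h :: real and J n :: nat and C :: "nat \<Rightarrow> nat" and c :: "nat \<Rightarrow> real"
  assumes h: "h > 0" and R: "R > 0" and Jh: "real J * h = 2 * R"
    and c_bounds: "\<And>k. - R \<le> c k \<and> c k \<le> R"
    and c_thresholds: "\<And>j k. j < J \<Longrightarrow> c k \<le> - R + real j * h \<longleftrightarrow> k < C j"
    and C_le: "\<And>j. j < J \<Longrightarrow> C j \<le> n"
  shows "(\<Sum>k<n. (sorted_entry n x k - c k)\<^sup>2)
    \<le> 4 * R * h * (real n + (\<Sum>j<J. \<bar>real (count_le n (- R + real j * h) x) - real (C j)\<bar>))
      + 2 * (\<Sum>i<n. (x i) ^ 4) / R\<^sup>2"
proof -
  let ?S = "\<lambda>k. sorted_entry n x k"
  have "(\<Sum>k<n. (?S k - c k)\<^sup>2)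
      \<le> (\<Sum>k<n. 2 * (clip R (?S k) - c k)\<^sup>2 + 2 * (?S k - clip R (?S k))\<^sup>2)"
  proof (intro sum_mono)
    fix k
    have "0 \<le> (clip R (?S k) - c k - (?S k - clip R (?S k)))\<^sup>2" by simp
    then show "(?S k - c k)\<^sup>2 \<le> 2 * (clip R (?S k) - c k)\<^sup>2 + 2 * (?S k - clip R (?S k))\<^sup>2"
      by (simp add: power2_eq_square algebra_simps)
  qed
  also have "\<dots> = 2 * (\<Sum>k<n. (clip R (?S k) - c k)\<^sup>2) + 2 * (\<Sum>i<n. (x i - clip R (x i))\<^sup>2)"
    by (simp add: sum.distrib sum_distrib_left[symmetric] sum_sorted_entry[of "\<lambda>y. (y - clip R y)\<^sup>2"])
  also have "(\<Sum>i<n. (x i - clip R (x i))\<^sup>2) \<le> (\<Sum>i<n. (x i) ^ 4) / R\<^sup>2"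
    unfolding sum_divide_distrib by (intro sum_mono sq_diff_clip_le R)
  finally show ?thesis
    using sum_sq_clip_sorted_entry_diff_le[OF h Jh c_bounds c_thresholds C_le, of x] by simp
qed

lemma (in prob_space) variance_le_expectation_sq_diff:
  fixes X :: "'a \<Rightarrow> real"
  assumes X: "integrable M X" and X2: "integrable M (\<lambda>x. (X x)\<^sup>2)"
  shows "variance X \<le> expectation (\<lambda>x. (X x - c)\<^sup>2)"
proof -
  have "(\<lambda>x. (X x - c)\<^sup>2) = (\<lambda>x. ((X x)\<^sup>2 - 2 * c * X x) + c\<^sup>2)"
    by (simp add: power2_eq_square algebra_simps)
  then have E: "expectation (\<lambda>x. (X x - c)\<^sup>2) = expectation (\<lambda>x. (X x)\<^sup>2) - 2 * c * expectation X + c\<^sup>2"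
    using X X2 by (simp add: prob_space)
  have "0 \<le> (expectation X - c)\<^sup>2" by simp
  then show ?thesis
    unfolding E variance_eq[OF X X2] by (simp add: power2_diff algebra_simps)
qed

lemma (in prob_space) expectation_abs_le_sqrt_second_moment:
  fixes Y :: "'a \<Rightarrow> real"
  assumes [measurable]: "Y \<in> borel_measurable M" and Y2: "integrable M (\<lambda>x. (Y x)\<^sup>2)"
  shows "expectation (\<lambda>x. \<bar>Y x\<bar>) \<le> sqrt (expectation (\<lambda>x. (Y x)\<^sup>2))"
proof -
  have "integrable M (\<lambda>x. \<bar>Y x\<bar>)"
    by (rule square_integrable_imp_integrable) (use Y2 in simp_all)
  moreover have "integrable M (\<lambda>x. \<bar>Y x\<bar>\<^sup>2)" using Y2 by simp
  ultimately have "variance (\<lambda>x. \<bar>Y x\<bar>) = expectation (\<lambda>x. (Y x)\<^sup>2) - (expectation (\<lambda>x. \<bar>Y x\<bar>))\<^sup>2"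
    by (subst variance_eq) simp_all
  then have "(expectation (\<lambda>x. \<bar>Y x\<bar>))\<^sup>2 \<le> expectation (\<lambda>x. (Y x)\<^sup>2)"
    using variance_positive[of "\<lambda>x. \<bar>Y x\<bar>"] by linarith
  then show ?thesis by (rule real_le_rsqrt)
qed

definition sorted_sample_variance :: "real measure \<Rightarrow> nat \<Rightarrow> real" where
  "sorted_sample_variance M n =
     (\<integral>x. (\<Sum>k<n. (sorted_entry n x k - (\<integral>y. sorted_entry n y k \<partial>PiM {..<n} (\<lambda>_. M)))\<^sup>2)
       \<partial>PiM {..<n} (\<lambda>_. M))"

context real_distribution
begin

abbreviation sample :: "nat \<Rightarrow> (nat \<Rightarrow> real) measure" where
  "sample n \<equiv> PiM {..<n} (\<lambda>_. M)"

lemma prob_space_sample: "prob_space (sample n)"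
  by (intro prob_space_PiM prob_space_axioms)

lemma
  fixes g :: "nat \<Rightarrow> real \<Rightarrow> real"
  assumes I: "I \<subseteq> {..<n}" and g: "\<And>i. i \<in> I \<Longrightarrow> integrable M (g i)"
  shows integrable_sample_prod: "integrable (sample n) (\<lambda>x. \<Prod>i\<in>I. g i (x i))"
    and integral_sample_prod: "(\<integral>x. (\<Prod>i\<in>I. g i (x i)) \<partial>sample n) = (\<Prod>i\<in>I. expectation (g i))"
proof -
  define f where "f i = (if i \<in> I then g i else (\<lambda>_. 1))" for i
  have f: "integrable M (f i)" for i
    unfolding f_def using g by auto
  have prod_f: "(\<Prod>i<n. f i (x i)) = (\<Prod>i\<in>I. g i (x i))" for x
    using I by (intro prod.mono_neutral_cong_right) (auto simp: f_def)
  have prod_expectation_f: "(\<Prod>i<n. expectation (f i)) = (\<Prod>i\<in>I. expectation (g i))"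
    using I prob_space by (intro prod.mono_neutral_cong_right) (auto simp: f_def)
  have product: "product_sigma_finite (\<lambda>_. M)"
    by (simp add: product_sigma_finite_def prob_space_imp_sigma_finite prob_space_axioms)
  show "integrable (sample n) (\<lambda>x. \<Prod>i\<in>I. g i (x i))"
    and "(\<integral>x. (\<Prod>i\<in>I. g i (x i)) \<partial>sample n) = (\<Prod>i\<in>I. expectation (g i))"
    using product_sigma_finite.product_integrable_prod[OF product, of "{..<n}" f]
      product_sigma_finite.product_integral_prod[OF product, of "{..<n}" f] f
    by (simp_all add: prod_f prod_expectation_f)
qed

lemma
  fixes g :: "real \<Rightarrow> real"
  assumes "i < n" "integrable M g"
  shows integrable_sample_coord: "integrable (sample n) (\<lambda>x. g (x i))"
    and integral_sample_coord: "(\<integral>x. g (x i) \<partial>sample n) = expectation g"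
  using integrable_sample_prod[of "{i}" n "\<lambda>_. g"] integral_sample_prod[of "{i}" n "\<lambda>_. g"] assms
  by auto

lemma
  fixes g :: "real \<Rightarrow> real"
  assumes "integrable M g"
  shows integrable_sum_sample_coord: "integrable (sample n) (\<lambda>x. \<Sum>i<n. g (x i))"
    and integral_sum_sample_coord: "(\<integral>x. (\<Sum>i<n. g (x i)) \<partial>sample n) = real n * expectation g"
proof -
  show "integrable (sample n) (\<lambda>x. \<Sum>i<n. g (x i))"
    using assms by (intro Bochner_Integration.integrable_sum integrable_sample_coord) auto
  have "(\<integral>x. (\<Sum>i<n. g (x i)) \<partial>sample n) = (\<Sum>i<n. \<integral>x. g (x i) \<partial>sample n)"
    using assms by (intro Bochner_Integration.integral_sum integrable_sample_coord) auto
  then show "(\<integral>x. (\<Sum>i<n. g (x i)) \<partial>sample n) = real n * expectation g"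
    using assms by (simp add: integral_sample_coord)
qed

lemma measurable_sample_coord [measurable]: "i < n \<Longrightarrow> (\<lambda>x. x i) \<in> borel_measurable (sample n)"
  using measurable_component_singleton[of i "{..<n}" "\<lambda>_. M"] measurable_cong_sets[of "sample n" "sample n" M borel]
  by simp

lemma measurable_count_le [measurable]: "(\<lambda>x. real (count_le n t x)) \<in> borel_measurable (sample n)"
  unfolding count_le_eq_sum_indicator by measurable

lemma measurable_sorted_entry [measurable]:
  assumes "k < n"
  shows "(\<lambda>x. sorted_entry n x k) \<in> borel_measurable (sample n)"
proof (subst borel_measurable_iff_le, intro allI)
  fix t
  have "{x \<in> space (sample n). sorted_entry n x k \<le> t} = {x \<in> space (sample n). real k < real (count_le n t x)}"
    using sorted_entry_le_iff[OF assms] by auto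
  also have "\<dots> \<in> sets (sample n)" by measurable
  finally show "{x \<in> space (sample n). sorted_entry n x k \<le> t} \<in> sets (sample n)" .
qed

lemma integrable_sorted_entry_sq:
  assumes k: "k < n" and sq: "integrable M (\<lambda>y. y\<^sup>2)"
  shows "integrable (sample n) (\<lambda>x. (sorted_entry n x k)\<^sup>2)"
proof (rule Bochner_Integration.integrable_bound)
  show "integrable (sample n) (\<lambda>x. \<Sum>i<n. (x i)\<^sup>2)"
    using sq by (rule integrable_sum_sample_coord)
  show "AE x in sample n. norm ((sorted_entry n x k)\<^sup>2) \<le> norm (\<Sum>i<n. (x i)\<^sup>2)"
  proof (intro AE_I2)
    fix x
    obtain i where "i < n" "sorted_entry n x k = x i" using sorted_entry_in_image[OF k, of x] by auto
    moreover have "(x i)\<^sup>2 \<le> (\<Sum>i<n. (x i)\<^sup>2)" if "i < n" for i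
      using that by (intro member_le_sum) auto
    ultimately show "norm ((sorted_entry n x k)\<^sup>2) \<le> norm (\<Sum>i<n. (x i)\<^sup>2)"
      by (auto intro: order_trans[OF _ abs_ge_self])
  qed
qed (use k in measurable)

lemma integrable_sorted_entry:
  assumes "k < n" "integrable M (\<lambda>y. y\<^sup>2)"
  shows "integrable (sample n) (\<lambda>x. sorted_entry n x k)"
proof -
  interpret S: prob_space "sample n" by (rule prob_space_sample)
  show ?thesis
    by (rule S.square_integrable_imp_integrable) (use assms in \<open>auto intro: integrable_sorted_entry_sq\<close>)
qed

lemma sorted_sample_variance_le:
  assumes "integrable M (\<lambda>y. y\<^sup>2)"
  shows "sorted_sample_variance M n \<le> (\<integral>x. (\<Sum>k<n. (sorted_entry n x k - c k)\<^sup>2) \<partial>sample n)"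
proof -
  interpret S: prob_space "sample n" by (rule prob_space_sample)
  have sq_diff: "integrable (sample n) (\<lambda>x. (sorted_entry n x k - d)\<^sup>2)" if "k < n" for k d
    using integrable_sorted_entry[OF that assms] integrable_sorted_entry_sq[OF that assms]
    by (simp add: power2_diff)
  have "sorted_sample_variance M n = (\<Sum>k<n. S.variance (\<lambda>x. sorted_entry n x k))"
    unfolding sorted_sample_variance_def using sq_diff by (simp add: Bochner_Integration.integral_sum)
  also have "\<dots> \<le> (\<Sum>k<n. S.expectation (\<lambda>x. (sorted_entry n x k - c k)\<^sup>2))"
    using assms
    by (intro sum_mono S.variance_le_expectation_sq_diff integrable_sorted_entry integrable_sorted_entry_sq) auto
  also have "\<dots> = (\<integral>x. (\<Sum>k<n. (sorted_entry n x k - c k)\<^sup>2) \<partial>sample n)"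
    using sq_diff by (simp add: Bochner_Integration.integral_sum)
  finally show ?thesis .
qed

lemma
  fixes u :: "real \<Rightarrow> real"
  assumes u: "integrable M u" and u2: "integrable M (\<lambda>y. (u y)\<^sup>2)" and mean: "expectation u = 0"
  shows integrable_sum_coord_sq: "integrable (sample n) (\<lambda>x. (\<Sum>i<n. u (x i))\<^sup>2)"
    and integral_sum_coord_sq:
      "(\<integral>x. (\<Sum>i<n. u (x i))\<^sup>2 \<partial>sample n) = real n * expectation (\<lambda>y. (u y)\<^sup>2)"
proof -
  have pair: "integrable (sample n) (\<lambda>x. u (x i) * u (x j))
      \<and> (\<integral>x. u (x i) * u (x j) \<partial>sample n) = (if i = j then expectation (\<lambda>y. (u y)\<^sup>2) else 0)"
    if "i < n" "j < n" for i j
  proof (cases "i = j")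
    case True
    then show ?thesis
      using integrable_sample_coord[OF \<open>i < n\<close> u2] integral_sample_coord[OF \<open>i < n\<close> u2]
      by (simp add: power2_eq_square)
  next
    case False
    then show ?thesis
      using integrable_sample_prod[of "{i, j}" n "\<lambda>_. u"] integral_sample_prod[of "{i, j}" n "\<lambda>_. u"]
        that u mean by simp
  qed
  have expand: "(\<lambda>x. (\<Sum>i<n. u (x i))\<^sup>2) = (\<lambda>x. \<Sum>i<n. \<Sum>j<n. u (x i) * u (x j))"
    by (simp add: power2_eq_square sum_product)
  show "integrable (sample n) (\<lambda>x. (\<Sum>i<n. u (x i))\<^sup>2)"
    unfolding expand using pair by (intro Bochner_Integration.integrable_sum) auto
  have "(\<integral>x. (\<Sum>i<n. \<Sum>j<n. u (x i) * u (x j)) \<partial>sample n)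
      = (\<Sum>i<n. \<integral>x. (\<Sum>j<n. u (x i) * u (x j)) \<partial>sample n)"
    using pair by (intro Bochner_Integration.integral_sum Bochner_Integration.integrable_sum) auto
  also have "\<dots> = (\<Sum>i<n. \<Sum>j<n. \<integral>x. u (x i) * u (x j) \<partial>sample n)"
    using pair by (intro sum.cong refl Bochner_Integration.integral_sum) auto
  also have "\<dots> = (\<Sum>i<n. \<Sum>j<n. if i = j then expectation (\<lambda>y. (u y)\<^sup>2) else 0)"
    using pair by (intro sum.cong refl) auto
  finally show "(\<integral>x. (\<Sum>i<n. u (x i))\<^sup>2 \<partial>sample n) = real n * expectation (\<lambda>y. (u y)\<^sup>2)"
    unfolding expand by simp
qed

lemma scaled_cdf_bounds: "0 \<le> real n * cdf M t" "real n * cdf M t \<le> real n"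
  using cdf_nonneg[of t] cdf_bounded_prob[of t] by (simp_all add: mult_left_le)

lemma integrable_abs_count_le_dev:
  "integrable (sample n) (\<lambda>x. \<bar>real (count_le n t x) - real n * cdf M t\<bar>)"
proof -
  interpret S: prob_space "sample n" by (rule prob_space_sample)
  have "\<bar>real (count_le n t x) - real n * cdf M t\<bar> \<le> real n" for x
    using count_le_le[of n t x] scaled_cdf_bounds[of n t] by linarith
  then show ?thesis by (intro S.integrable_const_bound[where B = "real n"]) auto
qed

lemma expectation_abs_count_le_dev:
  "(\<integral>x. \<bar>real (count_le n t x) - real n * cdf M t\<bar> \<partial>sample n) \<le> sqrt (real n)"
proof -
  interpret S: prob_space "sample n" by (rule prob_space_sample)
  define u where "u y = indicator {..t} y - cdf M t" for y :: real
  have u_bound: "\<bar>u y\<bar> \<le> 1" for y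
    using cdf_nonneg[of t] cdf_bounded_prob[of t] unfolding u_def by (auto simp: indicator_def)
  have [measurable]: "u \<in> borel_measurable borel" unfolding u_def by measurable
  have u2_bound: "(u y)\<^sup>2 \<le> 1" for y
    using u_bound[of y] by (metis abs_ge_zero power2_abs power_le_one)
  have u: "integrable M u" and u2: "integrable M (\<lambda>y. (u y)\<^sup>2)"
    using u_bound u2_bound by (auto intro!: integrable_const_bound[where B = 1])
  have mean: "expectation u = 0"
    unfolding u_def using prob_space
    by (subst Bochner_Integration.integral_diff) (auto simp: cdf_def2 less_top[symmetric])
  have second_moment: "expectation (\<lambda>y. (u y)\<^sup>2) \<le> 1"
    using u2 u2_bound prob_space by (intro integral_le_const) auto
  have dev_eq: "real (count_le n t x) - real n * cdf M t = (\<Sum>i<n. u (x i))" for x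
    unfolding count_le_eq_sum_indicator u_def by (simp add: sum_subtractf)
  have "S.expectation (\<lambda>x. \<bar>\<Sum>i<n. u (x i)\<bar>) \<le> sqrt (S.expectation (\<lambda>x. (\<Sum>i<n. u (x i))\<^sup>2))"
    by (rule S.expectation_abs_le_sqrt_second_moment) (measurable, rule integrable_sum_coord_sq[OF u u2 mean])
  also have "\<dots> = sqrt (real n * expectation (\<lambda>y. (u y)\<^sup>2))"
    by (simp only: integral_sum_coord_sq[OF u u2 mean])
  also have "\<dots> \<le> sqrt (real n)"
    using second_moment by (simp add: mult_left_le)
  finally show ?thesis by (simp only: dev_eq)
qed

lemma expectation_sum_abs_count_le_dev:
  "(\<integral>x. (\<Sum>j<J. \<bar>real (count_le n (t j) x) - real n * cdf M (t j)\<bar>) \<partial>sample n)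
    \<le> real J * sqrt (real n)"
  using sum_bounded_above[of "{..<J}" _ "sqrt (real n)"] expectation_abs_count_le_dev
  by (simp add: Bochner_Integration.integral_sum integrable_abs_count_le_dev)

lemma expectation_sum_sq_sorted_entry_diff_le:
  fixes R h :: real and J n :: nat and C :: "nat \<Rightarrow> nat" and c :: "nat \<Rightarrow> real"
  assumes m4: "integrable M (\<lambda>y. y ^ 4)"
    and h: "h > 0" and R: "R > 0" and Jh: "real J * h = 2 * R"
    and c_bounds: "\<And>k. - R \<le> c k \<and> c k \<le> R"
    and c_thresholds: "\<And>j k. j < J \<Longrightarrow> c k \<le> - R + real j * h \<longleftrightarrow> k < C j"
    and C_le: "\<And>j. j < J \<Longrightarrow> C j \<le> n"
    and C_approx: "\<And>j. j < J \<Longrightarrow> \<bar>real (C j) - real n * cdf M (- R + real j * h)\<bar> \<le> 1"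
  shows "(\<integral>x. (\<Sum>k<n. (sorted_entry n x k - c k)\<^sup>2) \<partial>sample n)
    \<le> 4 * R * h * (real n + real J * (sqrt (real n) + 1)) + 2 * real n * expectation (\<lambda>y. y ^ 4) / R\<^sup>2"
proof -
  interpret S: prob_space "sample n" by (rule prob_space_sample)
  let ?t = "\<lambda>j. - R + real j * h"
  let ?dev = "\<lambda>j x. \<bar>real (count_le n (?t j) x) - real n * cdf M (?t j)\<bar>"
  define B where "B x = 4 * R * h * (real n + real J) + 4 * R * h * (\<Sum>j<J. ?dev j x)
    + 2 * (\<Sum>i<n. (x i) ^ 4) / R\<^sup>2" for x
  have pointwise: "(\<Sum>k<n. (sorted_entry n x k - c k)\<^sup>2) \<le> B x" for x
  proof -
    have "(\<Sum>j<J. \<bar>real (count_le n (?t j) x) - real (C j)\<bar>) \<le> (\<Sum>j<J. ?dev j x + 1)"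
    proof (intro sum_mono)
      fix j assume "j \<in> {..<J}"
      then have "\<bar>real (C j) - real n * cdf M (?t j)\<bar> \<le> 1" using C_approx by simp
      then show "\<bar>real (count_le n (?t j) x) - real (C j)\<bar> \<le> ?dev j x + 1" by linarith
    qed
    then have "4 * R * h * (\<Sum>j<J. \<bar>real (count_le n (?t j) x) - real (C j)\<bar>)
        \<le> 4 * R * h * (real J + (\<Sum>j<J. ?dev j x))"
      using R h by (intro mult_left_mono) (simp_all add: sum.distrib)
    then have "4 * R * h * (real n + (\<Sum>j<J. \<bar>real (count_le n (?t j) x) - real (C j)\<bar>))
        \<le> 4 * R * h * (real n + real J) + 4 * R * h * (\<Sum>j<J. ?dev j x)"
      by (simp add: distrib_left)
    then show ?thesis
      using sum_sq_sorted_entry_diff_le[OF h R Jh c_bounds c_thresholds C_le, of x]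
      unfolding B_def by linarith
  qed
  have B_nonneg: "0 \<le> B x" for x
    unfolding B_def using R h
    by (intro add_nonneg_nonneg mult_nonneg_nonneg divide_nonneg_nonneg sum_nonneg) auto
  have int_dev: "integrable (sample n) (\<lambda>x. \<Sum>j<J. ?dev j x)"
    by (intro Bochner_Integration.integrable_sum integrable_abs_count_le_dev)
  have int_fourth: "integrable (sample n) (\<lambda>x. \<Sum>i<n. (x i) ^ 4)"
    using m4 by (rule integrable_sum_sample_coord)
  have "S.expectation B = 4 * R * h * (real n + real J) + 4 * R * h * S.expectation (\<lambda>x. \<Sum>j<J. ?dev j x)
      + 2 * S.expectation (\<lambda>x. \<Sum>i<n. (x i) ^ 4) / R\<^sup>2"
    unfolding B_def using int_dev int_fourth S.prob_space by simp
  also have "\<dots> \<le> 4 * R * h * (real n + real J) + 4 * R * h * (real J * sqrt (real n))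
        + 2 * (real n * expectation (\<lambda>y. y ^ 4)) / R\<^sup>2"
    using expectation_sum_abs_count_le_dev[where J = J and t = ?t and n = n] integral_sum_sample_coord[OF m4, of n] R h
    by (simp add: mult_left_mono)
  finally have expectation_B: "S.expectation B \<le> \<dots>" .
  have "(\<integral>x. (\<Sum>k<n. (sorted_entry n x k - c k)\<^sup>2) \<partial>sample n) \<le> S.expectation B"
    using pointwise B_nonneg int_dev int_fourth unfolding B_def by (intro integral_mono') auto
  then show ?thesis using expectation_B by (simp add: algebra_simps)
qed

lemma sorted_sample_variance_le_bound:
  fixes R :: real and J :: nat
  assumes m4: "integrable M (\<lambda>y. y ^ 4)" and R: "R > 0" and J: "J > 0"
  shows "sorted_sample_variance M n
    \<le> 8 * R\<^sup>2 * real n / real J + 8 * R\<^sup>2 * (sqrt (real n) + 1) + 2 * real n * expectation (\<lambda>y. y ^ 4) / R\<^sup>2"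
proof -
  define h where "h = 2 * R / real J"
  have h: "h > 0" and Jh: "real J * h = 2 * R" using R J unfolding h_def by simp_all
  let ?t = "\<lambda>j. - R + real j * h"
  \<comment> \<open>The comparison vector c will have exactly C j entries below the grid point t j,
    the expected number rounded down.\<close>
  define C where "C j = nat \<lfloor>real n * cdf M (?t j)\<rfloor>" for j
  have C_mono: "C j \<le> C j'" if "j \<le> j'" for j j'
    using that h unfolding C_def
    by (intro nat_mono floor_mono mult_left_mono cdf_nondecreasing) (simp_all add: mult_right_mono)
  have C_le: "C j \<le> n" for j
    using scaled_cdf_bounds[of n "?t j"] unfolding C_def by (simp add: nat_le_iff floor_le_iff)
  have C_approx: "\<bar>real (C j) - real n * cdf M (?t j)\<bar> \<le> 1" for j
  proof -
    have "real (C j) = of_int \<lfloor>real n * cdf M (?t j)\<rfloor>" using scaled_cdf_bounds[of n "?t j"] unfolding C_def by simp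
    then show ?thesis
      using of_int_floor_le[of "real n * cdf M (?t j)"] real_of_int_floor_gt_diff_one[of "real n * cdf M (?t j)"]
      by linarith
  qed
  obtain c where c_bounds: "\<And>k. - R \<le> c k \<and> c k \<le> R"
    and c_thresholds: "\<And>j k. j < J \<Longrightarrow> c k \<le> ?t j \<longleftrightarrow> k < C j"
    using obtain_threshold_sequence[OF h, of J C "- R"] C_mono Jh by auto
  have sq: "integrable M (\<lambda>y. y\<^sup>2)"
    by (rule square_integrable_imp_integrable) (use m4 in \<open>simp_all flip: power_mult\<close>)
  have "sorted_sample_variance M n \<le> (\<integral>x. (\<Sum>k<n. (sorted_entry n x k - c k)\<^sup>2) \<partial>sample n)"
    by (rule sorted_sample_variance_le[OF sq])
  also have "\<dots> \<le> 4 * R * h * (real n + real J * (sqrt (real n) + 1)) + 2 * real n * expectation (\<lambda>y. y ^ 4) / R\<^sup>2"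
    by (rule expectation_sum_sq_sorted_entry_diff_le[OF m4 h R Jh c_bounds c_thresholds C_le C_approx])
  also have "4 * R * h * (real n + real J * (sqrt (real n) + 1))
      = 8 * R\<^sup>2 * real n / real J + 8 * R\<^sup>2 * (sqrt (real n) + 1)"
    using J unfolding h_def by (simp add: field_simps power2_eq_square)
  finally show ?thesis .
qed

lemma sorted_sample_variance_nonneg: "0 \<le> sorted_sample_variance M n"
  unfolding sorted_sample_variance_def by (intro integral_nonneg_AE AE_I2 sum_nonneg) auto

lemma sorted_sample_variance_over_n_tendsto_0:
  assumes m4: "integrable M (\<lambda>y. y ^ 4)"
  shows "(\<lambda>n. sorted_sample_variance M n / real n) \<longlonglongrightarrow> 0"
proof (rule tendstoI)
  fix e :: real assume e: "e > 0"
  define m where "m = expectation (\<lambda>y. y ^ 4)"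
  have "m \<ge> 0" unfolding m_def by (intro integral_nonneg_AE) auto
  define R where "R = sqrt (8 * (m + 1) / e)"
  have R: "R > 0" and R2: "R\<^sup>2 = 8 * (m + 1) / e"
    unfolding R_def using e \<open>m \<ge> 0\<close> by simp_all
  define J where "J = nat \<lceil>32 * R\<^sup>2 / e\<rceil> + 1"
  have J: "J > 0" unfolding J_def by simp
  have "32 * R\<^sup>2 / e < real J" unfolding J_def by linarith
  then have grid_term: "8 * R\<^sup>2 / real J < e / 4" using e J by (simp add: field_simps)
  have tail_term: "2 * m / R\<^sup>2 < e / 4"
    unfolding R2 using e \<open>m \<ge> 0\<close> by (simp add: field_simps)
  have "(\<lambda>n. 8 * R\<^sup>2 * (sqrt (real n) + 1) / real n) \<longlonglongrightarrow> 0" by real_asymp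
  then have "eventually (\<lambda>n. 8 * R\<^sup>2 * (sqrt (real n) + 1) / real n < e / 4) sequentially"
    using e by (intro order_tendstoD(2)) auto
  then show "eventually (\<lambda>n. dist (sorted_sample_variance M n / real n) 0 < e) sequentially"
    using eventually_gt_at_top[of 0]
  proof eventually_elim
    case (elim n)
    then have n: "real n > 0" by simp
    have "sorted_sample_variance M n / real n
        \<le> (8 * R\<^sup>2 * real n / real J + 8 * R\<^sup>2 * (sqrt (real n) + 1) + 2 * real n * m / R\<^sup>2) / real n"
      using sorted_sample_variance_le_bound[OF m4 R J, of n] n unfolding m_def
      by (simp add: divide_right_mono)
    also have "\<dots> = 8 * R\<^sup>2 / real J + 8 * R\<^sup>2 * (sqrt (real n) + 1) / real n + 2 * m / R\<^sup>2"
      using n by (simp add: field_simps)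
    finally have "sorted_sample_variance M n / real n < e"
      using grid_term tail_term elim(1) e by linarith
    then show ?case using sorted_sample_variance_nonneg[of n] n by simp
  qed
qed

end

theorem theorem6:
  shows "(\<lambda>n. var_sorted n / real n) \<longlonglongrightarrow> 0"
proof -
  have "var_sorted n = sorted_sample_variance std_normal_distribution n" for n
    unfolding var_sorted_def sorted_sample_variance_def gauss_vec_def ..
  then show ?thesis
    using real_distribution.sorted_sample_variance_over_n_tendsto_0[OF real_dist_normal_dist
        integrable_std_normal_distribution_moment]
    by simp
qed

end
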